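(* Let $k>0$, $N\in\mathbb{N}^+$, $h=\frac1{N+1}$, and let $\mathcal{A}_h$ be the matrix defined below. Then for every such $h\in(0,1)$, $i\mathbb{R}\subset\rho(\mathcal{A}_h)$, i.e. $\mathcal{A}_h$ has no purely imaginary eigenvalues.
   Context: Let $D_h$ be the $(N+1)\times(N+1)$ lower bidiagonal matrix with $\frac12$ on the diagonal and first subdiagonal, and $M_h$ the $(N+1)\times(N+1)$ upper bidiagonal matrix with $-\frac1h$ on the diagonal and $\frac1h$ on the first superdiagonal; $e_{N+1}=(0,\dots,0,1)^\top$. For $Y_h=(y_1,\dots,y_{N+1})^\top\in\mathbb{C}^{N+1}$ let $Z_h$ solve $D_h^\top Z_h=-M_h^\top Y_h+\tfrac{ik}2y_{N+1}e_{N+1}$ and set $\mathcal{A}_hY_h=D_h^{-1}[-iM_hZ_h-\tfrac kh y_{N+1}e_{N+1}]$. This is the order-reduction semi-discretization of $w_t=-iw_{xx}$, $w(0,t)=0$, $w_x(1,t)=-ikw(1,t)$. $\rho(\cdot)$ denotes the resolvent set. *)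

theory Defs
  imports "Jordan_Normal_Form.Gauss_Jordan_Elimination"
begin

text \<open>Matrices are (N+1)x(N+1), indices 0..N (index N corresponds to y_{N+1}).\<close>

definition D_h :: "nat \<Rightarrow> complex mat" where
  "D_h N = mat (N+1) (N+1) (\<lambda>(i,j). if i = j \<or> i = j + 1 then 1/2 else 0)"

definition M_h :: "nat \<Rightarrow> real \<Rightarrow> complex mat" where
  "M_h N h = mat (N+1) (N+1)
     (\<lambda>(i,j). if i = j then - complex_of_real (1/h)
              else if j = i + 1 then complex_of_real (1/h) else 0)"

definition E_last :: "nat \<Rightarrow> complex mat" where
  "E_last N = mat (N+1) (N+1) (\<lambda>(i,j). if i = N \<and> j = N then 1 else 0)"

text \<open>A_h Y = D^{-1}[-i M Z - (k/h) y_{N+1} e], with D^T Z = -M^T Y + (ik/2) y_{N+1} e.\<close>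
definition A_h :: "nat \<Rightarrow> real \<Rightarrow> real \<Rightarrow> complex mat" where
  "A_h N h k =
     (let D = D_h N; M = M_h N h; E = E_last N;
          Dinv = the (mat_inverse D); DTinv = the (mat_inverse (transpose_mat D));
          Zmap = DTinv * (- transpose_mat M + (\<i> * complex_of_real k / 2) \<cdot>\<^sub>m E)
      in Dinv * ((- \<i>) \<cdot>\<^sub>m (M * Zmap) - complex_of_real (k / h) \<cdot>\<^sub>m E))"

definition resolvent_set :: "complex mat \<Rightarrow> complex set" where
  "resolvent_set A = {z. invertible_mat (z \<cdot>\<^sub>m 1\<^sub>m (dim_row A) - A)}"

end

theory Submission
  imports Defs "Jordan_Normal_Form.Determinant"
begin

(* Pad Y with the Dirichlet value w 0 = 0 and extend Z by the Robin value
   v (N + 1) = -i k w (N + 1). Then A_h Y = i \<omega> Y says exactly that (w, v) solves the box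
   (midpoint) scheme with mesh h for the system \<omega> w = -v', v = w'. This scheme conserves the
   discrete flux Im (v j * cnj (w j)); the flux vanishes at j = 0, and at j = N + 1 it equals
   -k |w (N + 1)|^2, so both boundary values at the right end vanish. Marching backwards then
   kills every value, unless \<omega> = -4/h^2, where the one-step map is singular; in that resonant
   case the scheme forces v j = 2 w j / h and v j = -2 w j / h at every interior node. *)

lemma smult_mat_mult_vec:
  assumes "A \<in> carrier_mat nr nc" and "v \<in> carrier_vec nc"
  shows "(a \<cdot>\<^sub>m A) *\<^sub>v v = a \<cdot>\<^sub>v (A *\<^sub>v (v :: 'a :: comm_ring vec))"
  using assms by (intro eq_vecI) auto

lemma mat_inverse_SomeE:
  fixes A :: "'a :: field mat"
  assumes A: "A \<in> carrier_mat n n" and "det A \<noteq> 0"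
  obtains B where "mat_inverse A = Some B" and "A * B = 1\<^sub>m n" and "B * A = 1\<^sub>m n"
    and "B \<in> carrier_mat n n"
proof (cases "mat_inverse A")
  case None
  with mat_inverse(1)[OF A, where b = "()"]
    det_non_zero_imp_unit[OF A \<open>det A \<noteq> 0\<close>, where b = "()"]
  show ?thesis
    by blast
next
  case (Some B)
  with mat_inverse(2)[OF A] that show ?thesis
    by blast
qed

lemma lower_bidiagonal_mult_vec_index:
  fixes a b :: "'a :: comm_ring_1"
  assumes "i < n" and "dim_vec v = n"
  shows "(mat n n (\<lambda>(i, j). if i = j then a else if i = Suc j then b else 0) *\<^sub>v v) $ i
    = a * v $ i + (if i = 0 then 0 else b * v $ (i - 1))"
proof -
  have "(mat n n (\<lambda>(i, j). if i = j then a else if i = Suc j then b else 0) *\<^sub>v v) $ i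
      = (\<Sum>j<n. (if j = i then a * v $ j else 0) + (if Suc j = i then b * v $ j else 0))"
    using assms by (auto simp: scalar_prod_def lessThan_atLeast0 intro!: sum.cong)
  also have "\<dots> = a * v $ i + (if i = 0 then 0 else b * v $ (i - 1))"
    using assms by (cases i) (simp_all add: sum.distrib)
  finally show ?thesis .
qed

lemma upper_bidiagonal_mult_vec_index:
  fixes a b :: "'a :: comm_ring_1"
  assumes "i < n" and "dim_vec v = n"
  shows "(mat n n (\<lambda>(i, j). if i = j then a else if j = Suc i then b else 0) *\<^sub>v v) $ i
    = a * v $ i + (if Suc i < n then b * v $ Suc i else 0)"
proof -
  have "(mat n n (\<lambda>(i, j). if i = j then a else if j = Suc i then b else 0) *\<^sub>v v) $ i
      = (\<Sum>j<n. (if j = i then a * v $ j else 0) + (if j = Suc i then b * v $ j else 0))"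
    using assms by (auto simp: scalar_prod_def lessThan_atLeast0 intro!: sum.cong)
  also have "\<dots> = a * v $ i + (if Suc i < n then b * v $ Suc i else 0)"
    using assms by (simp add: sum.distrib)
  finally show ?thesis .
qed

lemma mem_resolvent_setI:
  assumes A: "A \<in> carrier_mat n n"
    and no_eigenvector: "\<And>v. v \<in> carrier_vec n \<Longrightarrow> A *\<^sub>v v = z \<cdot>\<^sub>v v \<Longrightarrow> v = 0\<^sub>v n"
  shows "z \<in> resolvent_set A"
proof -
  let ?B = "z \<cdot>\<^sub>m 1\<^sub>m n - A"
  have B: "?B \<in> carrier_mat n n"
    using A by auto
  have "v = 0\<^sub>v n" if v: "v \<in> carrier_vec n" and "?B *\<^sub>v v = 0\<^sub>v n" for v
  proof (rule no_eigenvector[OF v], rule eq_vecI)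
    fix i
    assume "i < dim_vec (z \<cdot>\<^sub>v v)"
    with A v have "(?B *\<^sub>v v) $ i = z * v $ i - (A *\<^sub>v v) $ i"
      by (simp add: minus_mult_distrib_mat_vec[of _ n n] smult_mat_mult_vec[of _ n n])
    with \<open>?B *\<^sub>v v = 0\<^sub>v n\<close> \<open>i < dim_vec (z \<cdot>\<^sub>v v)\<close> v
    show "(A *\<^sub>v v) $ i = (z \<cdot>\<^sub>v v) $ i"
      by simp
  qed (use A v in simp)
  then have "det ?B \<noteq> 0"
    using det_0_iff_vec_prod_zero_field[OF B] by blast
  then obtain B' where "?B * B' = 1\<^sub>m n" and "B' * ?B = 1\<^sub>m n" and "B' \<in> carrier_mat n n"
    using mat_inverse_SomeE[OF B] by metis
  with A B have "invertible_mat ?B"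
    unfolding invertible_mat_def inverts_mat_def by auto
  with A show ?thesis
    unfolding resolvent_set_def by simp
qed

(* One step of the box scheme with mesh width 1/r for \<omega> w = -v', v = w'. *)
definition box_scheme_step :: "real \<Rightarrow> real \<Rightarrow> (nat \<Rightarrow> complex) \<Rightarrow> (nat \<Rightarrow> complex) \<Rightarrow> nat \<Rightarrow> bool"
  where "box_scheme_step r \<omega> w v i \<longleftrightarrow>
    of_real \<omega> * (w (Suc i) + w i) / 2 = - of_real r * (v (Suc i) - v i) \<and>
    (v i + v (Suc i)) / 2 = of_real r * (w (Suc i) - w i)"

lemma box_scheme_step_flux:
  assumes "r \<noteq> 0" and "box_scheme_step r \<omega> w v i"
  shows "Im (v (Suc i) * cnj (w (Suc i))) = Im (v i * cnj (w i))"
proof -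
  let ?p = "v (Suc i)" and ?q = "v i" and ?a = "w (Suc i)" and ?b = "w i"
  from assms(2) have flux_terms: "of_real r * (?p - ?q) = - (of_real \<omega> / 2) * (?a + ?b)"
      "of_real r * (?a - ?b) = (?q + ?p) / 2"
    unfolding box_scheme_step_def by (simp_all add: field_simps)
  \<comment> \<open>After substituting the scheme, both summands are real multiples of squared moduli.\<close>
  have "of_real (2 * r) * (?p * cnj ?a - ?q * cnj ?b)
      = (of_real r * (?p - ?q)) * cnj (?a + ?b) + (?q + ?p) * cnj (of_real r * (?a - ?b))"
    by (simp add: algebra_simps)
  also have "\<dots> = - (of_real \<omega> / 2) * ((?a + ?b) * cnj (?a + ?b)) + ((?q + ?p) * cnj (?q + ?p)) / 2"
    unfolding flux_terms by (simp add: field_simps)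
  finally have "Im (of_real (2 * r) * (?p * cnj ?a - ?q * cnj ?b)) = 0"
    by (simp only: complex_mult_cnj) simp
  with assms(1) show ?thesis by simp
qed

lemma box_scheme_flux_eq_0:
  assumes "r \<noteq> 0" and "w 0 = 0" and "\<And>i. i \<le> N \<Longrightarrow> box_scheme_step r \<omega> w v i"
    and "j \<le> Suc N"
  shows "Im (v j * cnj (w j)) = 0"
  using assms(4)
proof (induction j)
  case 0
  with assms(2) show ?case by simp
next
  case (Suc j)
  with box_scheme_step_flux[OF assms(1) assms(3)] show ?case by simp
qed

lemma box_scheme_step_backward:
  assumes "\<omega> \<noteq> - 4 * r\<^sup>2" and "box_scheme_step r \<omega> w v i"
    and "w (Suc i) = 0" and "v (Suc i) = 0"
  shows "w i = 0 \<and> v i = 0"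
proof -
  from assms(2-4) have v: "v i = - 2 * of_real r * w i" and "of_real \<omega> * w i = 2 * of_real r * v i"
    unfolding box_scheme_step_def by (simp_all add: field_simps)
  then have "of_real (\<omega> + 4 * r\<^sup>2) * w i = 0"
    by (simp add: algebra_simps power2_eq_square)
  moreover have "\<omega> + 4 * r\<^sup>2 \<noteq> 0"
    using assms(1) by linarith
  ultimately have "w i = 0"
    by (metis mult_eq_0_iff of_real_eq_0_iff)
  with v show ?thesis by simp
qed

lemma box_scheme_step_resonant:
  assumes "r \<noteq> 0" and "\<omega> = - 4 * r\<^sup>2" and "box_scheme_step r \<omega> w v i"
  shows "v (Suc i) = 2 * of_real r * w (Suc i)" and "v i = - 2 * of_real r * w i"
proof -
  from assms(3) have F1: "of_real \<omega> * (w (Suc i) + w i) / 2 = - of_real r * (v (Suc i) - v i)"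
    and sum: "v i + v (Suc i) = 2 * of_real r * (w (Suc i) - w i)"
    unfolding box_scheme_step_def by simp_all
  have "- of_real r * (v (Suc i) - v i) = of_real \<omega> * (w (Suc i) + w i) / 2"
    using F1 by simp
  also have "\<dots> = - of_real r * (2 * of_real r * (w (Suc i) + w i))"
    unfolding assms(2) by (simp add: power2_eq_square)
  finally have "- of_real r * (v (Suc i) - v i)
      = - of_real r * (2 * of_real r * (w (Suc i) + w i))" .
  with assms(1) have diff: "v (Suc i) - v i = 2 * of_real r * (w (Suc i) + w i)"
    by simp
  have "v (Suc i) = ((v i + v (Suc i)) + (v (Suc i) - v i)) / 2"
    by simp
  also have "\<dots> = 2 * of_real r * w (Suc i)"
    unfolding sum diff by (simp add: field_simps)
  finally show "v (Suc i) = 2 * of_real r * w (Suc i)" .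
  have "v i = ((v i + v (Suc i)) - (v (Suc i) - v i)) / 2"
    by simp
  also have "\<dots> = - 2 * of_real r * w i"
    unfolding sum diff by (simp add: field_simps)
  finally show "v i = - 2 * of_real r * w i" .
qed

lemma box_scheme_Dirichlet_Robin_eq_0:
  assumes r: "r \<noteq> 0" and k: "k \<noteq> 0"
    and scheme: "\<And>i. i \<le> N \<Longrightarrow> box_scheme_step r \<omega> w v i"
    and dirichlet: "w 0 = 0" and robin: "v (Suc N) = - (\<i> * of_real k) * w (Suc N)"
    and j: "j \<le> Suc N"
  shows "w j = 0"
proof -
  have "Im (v (Suc N) * cnj (w (Suc N))) = 0"
    using box_scheme_flux_eq_0[OF r dirichlet scheme] by blast
  moreover have "v (Suc N) * cnj (w (Suc N)) = - \<i> * of_real (k * (cmod (w (Suc N)))\<^sup>2)"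
    unfolding robin of_real_mult complex_norm_square by (simp add: ac_simps)
  ultimately have "k * (cmod (w (Suc N)))\<^sup>2 = 0"
    by simp
  with k have w_end: "w (Suc N) = 0"
    by simp
  with robin have v_end: "v (Suc N) = 0"
    by simp
  show ?thesis
  proof (cases "\<omega> = - 4 * r\<^sup>2")
    case False
    from j have "w j = 0 \<and> v j = 0"
    proof (induction rule: inc_induct)
      case base
      from w_end v_end show ?case by simp
    next
      case (step i)
      with box_scheme_step_backward[OF False scheme] show ?case by simp
    qed
    then show ?thesis by simp
  next
    case True
    consider "j = 0" | "j = Suc N" | i where "j = Suc i" and "Suc i \<le> N"
      using j by (cases j; cases "j = Suc N") auto
    then show ?thesis
    proof cases
      case 3
      then have "v j = 2 * of_real r * w j" and "v j = - 2 * of_real r * w j"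
        using box_scheme_step_resonant(1)[OF r True scheme, of i]
          box_scheme_step_resonant(2)[OF r True scheme, of "Suc i"] by simp_all
      with r show ?thesis by simp
    qed (use dirichlet w_end in simp_all)
  qed
qed

lemma D_h_carrier: "D_h N \<in> carrier_mat (N + 1) (N + 1)"
  by (simp add: D_h_def)

lemma M_h_carrier: "M_h N h \<in> carrier_mat (N + 1) (N + 1)"
  by (simp add: M_h_def)

lemma E_last_carrier: "E_last N \<in> carrier_mat (N + 1) (N + 1)"
  by (simp add: E_last_def)

lemma D_h_mult_vec_index:
  assumes "i \<le> N" and "dim_vec u = N + 1"
  shows "(D_h N *\<^sub>v u) $ i = (u $ i + (if i = 0 then 0 else u $ (i - 1))) / 2"
proof -
  have "D_h N = mat (N + 1) (N + 1) (\<lambda>(i, j). if i = j then 1/2 else if i = Suc j then 1/2 else 0)"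
    unfolding D_h_def by (rule cong_mat) auto
  then have "(D_h N *\<^sub>v u) $ i = 1/2 * u $ i + (if i = 0 then 0 else 1/2 * u $ (i - 1))"
    using assms by (simp only:) (rule lower_bidiagonal_mult_vec_index, simp_all)
  then show ?thesis
    by (simp add: add_divide_distrib)
qed

lemma transpose_D_h_mult_vec_index:
  assumes "i \<le> N" and "dim_vec u = N + 1"
  shows "(transpose_mat (D_h N) *\<^sub>v u) $ i = (u $ i + (if i < N then u $ Suc i else 0)) / 2"
proof -
  have "transpose_mat (D_h N)
      = mat (N + 1) (N + 1) (\<lambda>(i, j). if i = j then 1/2 else if j = Suc i then 1/2 else 0)"
    unfolding D_h_def by (rule eq_matI) auto
  then have "(transpose_mat (D_h N) *\<^sub>v u) $ i
      = 1/2 * u $ i + (if Suc i < N + 1 then 1/2 * u $ Suc i else 0)"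
    using assms by (simp only:) (rule upper_bidiagonal_mult_vec_index, simp_all)
  then show ?thesis
    by (simp add: add_divide_distrib)
qed

lemma M_h_mult_vec_index:
  assumes "i \<le> N" and "dim_vec u = N + 1"
  shows "(M_h N h *\<^sub>v u) $ i = of_real (1 / h) * ((if i < N then u $ Suc i else 0) - u $ i)"
proof -
  have "M_h N h = mat (N + 1) (N + 1)
      (\<lambda>(i, j). if i = j then - of_real (1 / h) else if j = Suc i then of_real (1 / h) else 0)"
    unfolding M_h_def by (rule cong_mat) auto
  then have "(M_h N h *\<^sub>v u) $ i
      = - of_real (1 / h) * u $ i + (if Suc i < N + 1 then of_real (1 / h) * u $ Suc i else 0)"
    using assms by (simp only:) (rule upper_bidiagonal_mult_vec_index, simp_all)
  then show ?thesis
    by (simp add: algebra_simps)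
qed

lemma transpose_M_h_mult_vec_index:
  assumes "i \<le> N" and "dim_vec u = N + 1"
  shows "(transpose_mat (M_h N h) *\<^sub>v u) $ i
    = of_real (1 / h) * ((if i = 0 then 0 else u $ (i - 1)) - u $ i)"
proof -
  have "transpose_mat (M_h N h) = mat (N + 1) (N + 1)
      (\<lambda>(i, j). if i = j then - of_real (1 / h) else if i = Suc j then of_real (1 / h) else 0)"
    unfolding M_h_def by (rule eq_matI) auto
  then have "(transpose_mat (M_h N h) *\<^sub>v u) $ i
      = - of_real (1 / h) * u $ i + (if i = 0 then 0 else of_real (1 / h) * u $ (i - 1))"
    using assms by (simp only:) (rule lower_bidiagonal_mult_vec_index, simp_all)
  then show ?thesis
    by (simp add: algebra_simps)
qed

lemma E_last_mult_vec_index: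
  assumes "i \<le> N" and "dim_vec u = N + 1"
  shows "(E_last N *\<^sub>v u) $ i = (if i = N then u $ N else 0)"
  using assms by (auto simp: E_last_def scalar_prod_def if_distrib[of "\<lambda>x. x * _"] cong: if_cong)

lemma det_D_h: "det (D_h N) = 1 / 2 ^ (N + 1)"
proof -
  have "det (D_h N) = prod_list (diag_mat (D_h N))"
    by (rule det_lower_triangular[of "N + 1"]) (auto simp: D_h_def)
  also have "diag_mat (D_h N) = replicate (N + 1) (1 / 2)"
    by (rule nth_equalityI) (simp_all add: diag_mat_def D_h_def del: upt_Suc replicate_Suc)
  finally show ?thesis by (simp add: power_one_over)
qed

lemma D_h_inverses:
  obtains Dinv DTinv where "mat_inverse (D_h N) = Some Dinv" and "D_h N * Dinv = 1\<^sub>m (N + 1)"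
    and "Dinv \<in> carrier_mat (N + 1) (N + 1)"
    and "mat_inverse (transpose_mat (D_h N)) = Some DTinv"
    and "transpose_mat (D_h N) * DTinv = 1\<^sub>m (N + 1)"
    and "DTinv \<in> carrier_mat (N + 1) (N + 1)"
proof -
  note D = D_h_carrier[of N]
  then have DT: "transpose_mat (D_h N) \<in> carrier_mat (N + 1) (N + 1)"
    by simp
  have "det (D_h N) \<noteq> 0" and "det (transpose_mat (D_h N)) \<noteq> 0"
    by (simp_all add: det_D_h det_transpose[OF D])
  with mat_inverse_SomeE[OF D] mat_inverse_SomeE[OF DT] that show ?thesis
    by metis
qed

lemma A_h_carrier: "A_h N h k \<in> carrier_mat (N + 1) (N + 1)"
proof -
  obtain Dinv DTinv where "mat_inverse (D_h N) = Some Dinv" "Dinv \<in> carrier_mat (N + 1) (N + 1)"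
    "mat_inverse (transpose_mat (D_h N)) = Some DTinv" "DTinv \<in> carrier_mat (N + 1) (N + 1)"
    by (rule D_h_inverses)
  then show ?thesis
    by (intro carrier_matI) (simp_all add: A_h_def Let_def M_h_def E_last_def)
qed

lemma A_h_eigen_system:
  assumes Y: "Y \<in> carrier_vec (N + 1)" and eigen: "A_h N h k *\<^sub>v Y = z \<cdot>\<^sub>v Y"
  obtains Z where "Z \<in> carrier_vec (N + 1)"
    and "transpose_mat (D_h N) *\<^sub>v Z
      = - (transpose_mat (M_h N h) *\<^sub>v Y) + (\<i> * of_real k / 2) \<cdot>\<^sub>v (E_last N *\<^sub>v Y)"
    and "z \<cdot>\<^sub>v (D_h N *\<^sub>v Y) = - \<i> \<cdot>\<^sub>v (M_h N h *\<^sub>v Z) - of_real (k / h) \<cdot>\<^sub>v (E_last N *\<^sub>v Y)"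
proof -
  let ?n = "N + 1" and ?D = "D_h N" and ?M = "M_h N h" and ?E = "E_last N"
  note D = D_h_carrier[of N] and M = M_h_carrier[of N h] and E = E_last_carrier[of N]
  obtain Dinv DTinv where Dinv: "mat_inverse ?D = Some Dinv" "?D * Dinv = 1\<^sub>m ?n"
    "Dinv \<in> carrier_mat ?n ?n"
    and DTinv: "mat_inverse (transpose_mat ?D) = Some DTinv"
    "transpose_mat ?D * DTinv = 1\<^sub>m ?n" "DTinv \<in> carrier_mat ?n ?n"
    by (rule D_h_inverses)
  define W where "W = - transpose_mat ?M + (\<i> * of_real k / 2) \<cdot>\<^sub>m ?E"
  define Z where "Z = DTinv *\<^sub>v (W *\<^sub>v Y)"
  have W: "W \<in> carrier_mat ?n ?n"
    using M E by (simp add: W_def)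
  have Z: "Z \<in> carrier_vec ?n"
    using DTinv(3) W Y by (simp add: Z_def)
  define X where "X = (- \<i>) \<cdot>\<^sub>m (?M * (DTinv * W)) - of_real (k / h) \<cdot>\<^sub>m ?E"
  have X: "X \<in> carrier_mat ?n ?n"
    unfolding X_def using M DTinv(3) W E by (intro minus_carrier_mat) auto
  have A: "A_h N h k = Dinv * X"
    unfolding A_h_def Let_def Dinv(1) DTinv(1) W_def X_def by simp
  have "transpose_mat ?D *\<^sub>v Z = (transpose_mat ?D * DTinv) *\<^sub>v (W *\<^sub>v Y)"
    using D DTinv(3) W Y by (simp add: Z_def)
  also have "\<dots> = - (transpose_mat ?M *\<^sub>v Y) + (\<i> * of_real k / 2) \<cdot>\<^sub>v (?E *\<^sub>v Y)"
    using M E Y by (simp add: DTinv(2) W_def add_mult_distrib_mat_vec[of _ ?n ?n] smult_mat_mult_vec)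
  finally have DZ: "transpose_mat ?D *\<^sub>v Z = \<dots>" .
  have "z \<cdot>\<^sub>v (?D *\<^sub>v Y) = ?D *\<^sub>v (A_h N h k *\<^sub>v Y)"
    using D Y by (simp add: eigen mult_mat_vec)
  also have "\<dots> = (?D * Dinv) *\<^sub>v (X *\<^sub>v Y)"
    using D Dinv(3) X Y by (simp add: A)
  also have "\<dots> = X *\<^sub>v Y"
    using X Y by (simp add: Dinv(2))
  also have "\<dots> = - \<i> \<cdot>\<^sub>v (?M *\<^sub>v Z) - of_real (k / h) \<cdot>\<^sub>v (?E *\<^sub>v Y)"
    using M DTinv(3) W E Y
    by (simp add: X_def Z_def assoc_mult_mat_vec[OF M mult_carrier_mat[OF DTinv(3) W] Y]
        minus_mult_distrib_mat_vec[of _ ?n ?n] smult_mat_mult_vec[of _ ?n ?n])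
  finally show ?thesis
    using that Z DZ by blast
qed

lemma A_h_imaginary_eigenvector_eq_0:
  assumes h: "h \<noteq> 0" and k: "k \<noteq> 0" and Y: "Y \<in> carrier_vec (N + 1)"
    and eigen: "A_h N h k *\<^sub>v Y = (\<i> * of_real \<omega>) \<cdot>\<^sub>v Y"
  shows "Y = 0\<^sub>v (N + 1)"
proof -
  obtain Z where Z: "Z \<in> carrier_vec (N + 1)"
    and adjoint: "transpose_mat (D_h N) *\<^sub>v Z
      = - (transpose_mat (M_h N h) *\<^sub>v Y) + (\<i> * of_real k / 2) \<cdot>\<^sub>v (E_last N *\<^sub>v Y)"
    and primal: "(\<i> * of_real \<omega>) \<cdot>\<^sub>v (D_h N *\<^sub>v Y)
      = - \<i> \<cdot>\<^sub>v (M_h N h *\<^sub>v Z) - of_real (k / h) \<cdot>\<^sub>v (E_last N *\<^sub>v Y)"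
    using A_h_eigen_system[OF Y eigen] by blast
  define w where "w j = (if j = 0 then 0 else Y $ (j - 1))" for j
  define v where "v j = (if j \<le> N then Z $ j else - (\<i> * of_real k) * Y $ N)" for j
  have "box_scheme_step (1 / h) \<omega> w v i" if i: "i \<le> N" for i
  proof -
    note dims = carrier_matD[OF D_h_carrier] carrier_matD[OF M_h_carrier]
      carrier_matD[OF E_last_carrier]
    let ?e = "(E_last N *\<^sub>v Y) $ i"
    have Y_i: "Y $ i = w (Suc i)" and Y_prev: "(if i = 0 then 0 else Y $ (i - 1)) = w i"
      by (simp_all add: w_def)
    \<comment> \<open>At i = N the Robin value absorbs the boundary term ?e.\<close>
    have Z_i: "Z $ i = v i"
      and Z_next: "(if i < N then Z $ Suc i else 0) = v (Suc i) + \<i> * of_real k * ?e"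
      using i Y by (auto simp: v_def E_last_mult_vec_index)
    from arg_cong[OF primal, of "\<lambda>u. u $ i"] i Y Z
    have "\<i> * (of_real \<omega> * (D_h N *\<^sub>v Y) $ i)
        = \<i> * (- (M_h N h *\<^sub>v Z) $ i + \<i> * of_real (k / h) * ?e)"
      by (simp add: dims algebra_simps eq_neg_iff_add_eq_0)
    then have "of_real \<omega> * (D_h N *\<^sub>v Y) $ i = - (M_h N h *\<^sub>v Z) $ i + \<i> * of_real (k / h) * ?e"
      by simp
    then have "of_real \<omega> * (w (Suc i) + w i) / 2 = - of_real (1 / h) * (v (Suc i) - v i)"
      using i Y Z h
      by (simp add: D_h_mult_vec_index M_h_mult_vec_index Y_i Y_prev Z_i Z_next field_simps)
    moreover from arg_cong[OF adjoint, of "\<lambda>u. u $ i"] i Y Z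
    have "(transpose_mat (D_h N) *\<^sub>v Z) $ i
        = - (transpose_mat (M_h N h) *\<^sub>v Y) $ i + \<i> * of_real k / 2 * ?e"
      by (simp add: dims)
    then have "(v i + v (Suc i)) / 2 = of_real (1 / h) * (w (Suc i) - w i)"
      using i Y Z h by (simp add: transpose_D_h_mult_vec_index transpose_M_h_mult_vec_index
          Y_i Y_prev Z_i Z_next algebra_simps add_divide_distrib)
    ultimately show ?thesis
      unfolding box_scheme_step_def ..
  qed
  moreover have "w 0 = 0" and "v (Suc N) = - (\<i> * of_real k) * w (Suc N)"
    by (simp_all add: w_def v_def)
  ultimately have "w (Suc i) = 0" if "i < N + 1" for i
    using box_scheme_Dirichlet_Robin_eq_0[of "1 / h" k N \<omega> w v "Suc i"] h k that by simp
  with Y show ?thesis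
    by (intro eq_vecI) (simp_all add: w_def)
qed

theorem lemma4:
  fixes k :: real and N :: nat and h :: real
  assumes "k > 0" and "N \<ge> 1" and "h = 1 / real (N + 1)"
  shows "{\<i> * complex_of_real \<omega> | \<omega>. True} \<subseteq> resolvent_set (A_h N h k)"
proof
  fix z
  assume "z \<in> {\<i> * complex_of_real \<omega> | \<omega>. True}"
  then obtain \<omega> where z: "z = \<i> * of_real \<omega>"
    by blast
  from assms have "h \<noteq> 0" and "k \<noteq> 0"
    by simp_all
  from A_h_carrier A_h_imaginary_eigenvector_eq_0[OF this]
  show "z \<in> resolvent_set (A_h N h k)"
    unfolding z by (rule mem_resolvent_setI)
qed

end
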